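(* The formal series $\mathbb F_1,\mathbb F_4$ satisfy $$\mathbb P(\mathbb F_1)-\mathbb Q(\mathbb F_4)=1,\qquad -\mathbb Q(\mathbb F_1)+\mathbb P(\mathbb F_4)=XY.$$
   Context: Let $\Gamma_{k,r}(d,j)$ ($k,r,d\in\mathbb N$, $j\in\{1,2,3,4\}$) be defined as follows. On the $2$-regular Bethe lattice $\mathcal B$ (infinite tree with all nodes of degree $3$, edges of length $1$, $m(B)$ midpoint of edge $B$), a path of length $k\ge1$ from oriented edge $\vec A$ to $\vec B$ is a tuple $(\vec C_0=\vec A,\dots,\vec C_k=\vec B)$ with the terminal node of $\vec C_i$ equal to the initial node of $\vec C_{i+1}$; an inversion is an $i$ with $\vec C_{i+1}=-\vec C_i$. For a pair $(\vec A,\vec B)$ at distance $d=\mathrm{dist}(m(A),m(B))\ge1$: $\vec A$ points toward $B$ if its terminal node is on the geodesic from $m(A)$ to $m(B)$, $\vec B$ points away from $A$ if its initial node is on it; type 1: ($\vec A$ toward, $\vec B$ away), type 2: (toward, toward $A$), type 3: (away from $B$, toward $A$), type 4: (away, away). For $d=0$, types 1,3 mean $\vec B=\vec A$ and types 2,4 mean $\vec B=-\vec A$. For $k\ge1$, $\Gamma_{k,r}(d,j)$ is the number of paths of length $k$ with $r$ inversions from $\vec A$ to $\vec B$ for a pair of type $j$ at distance $d$; for $k=0$, $\Gamma_{0,0}(0,1)=\Gamma_{0,0}(0,3)=1$ and $\Gamma_{0,r}(d,j)=0$ otherwise. Define formal power series $\mathbb F_j=\sum_{k,r,d\ge0}\Gamma_{k,r}(d,j)X^kY^rZ^d$.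 On formal series in $X,Y,Z$ let $\Theta(F)=F-\frac{2X}{Z}(F-F_{|Z=0})$; $\Theta$ is invertible: if $\Theta(F)=\sum_nG_n(X,Y)Z^n$ then $F=\sum_nF_nZ^n$ with $F_n=\sum_{p\ge0}(2X)^pG_{n+p}$. Define $\mathbb P(F)=F-XZF-X^2(Y^2+Y)\Theta^{-1}(F)+X^2Y\,\Theta^{-1}(F)_{|Z=0}$ and $\mathbb Q(F)=2X^2Y\,\partial_Z\Theta^{-1}(F)_{|Z=0}$. *)

theory Defs
  imports Main
begin

text \<open>Concrete model: vertices are reduced words over {0,1,2} (no two consecutive
equal letters), i.e. elements of the free product Z2*Z2*Z2; the parent of a
nonempty word is its tail.\<close>

definition bvert :: "nat list \<Rightarrow> bool" where
  "bvert w \<longleftrightarrow> set w \<subseteq> {0,1,2} \<and> (\<forall>i. Suc i < length w \<longrightarrow> w ! i \<noteq> w ! Suc i)"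

definition badj :: "nat list \<Rightarrow> nat list \<Rightarrow> bool" where
  "badj u v \<longleftrightarrow> bvert u \<and> bvert v \<and> ((u \<noteq> [] \<and> v = tl u) \<or> (v \<noteq> [] \<and> u = tl v))"

type_synonym oedge = "nat list \<times> nat list"

text \<open>Oriented edge (initial node, terminal node).\<close>
definition is_oedge :: "oedge \<Rightarrow> bool" where
  "is_oedge A \<longleftrightarrow> badj (fst A) (snd A)"

definition rev_edge :: "oedge \<Rightarrow> oedge" where
  "rev_edge A = (snd A, fst A)"

definition vdist :: "nat list \<Rightarrow> nat list \<Rightarrow> nat" where
  "vdist u v = (LEAST n. \<exists>ws. length ws = Suc n \<and> hd ws = u \<and> last ws = v \<and>
                          (\<forall>i<n. badj (ws ! i) (ws ! Suc i)))"

text \<open>Distances in half-units (so that midpoints of edges have integral distances).\<close>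
definition hdist_vm :: "nat list \<Rightarrow> oedge \<Rightarrow> nat" where
  "hdist_vm x A = 2 * min (vdist x (fst A)) (vdist x (snd A)) + 1"

definition hdist_mm :: "oedge \<Rightarrow> oedge \<Rightarrow> nat" where
  "hdist_mm A B = (if {fst A, snd A} = {fst B, snd B} then 0
     else 2 * Min {vdist a b | a b. a \<in> {fst A, snd A} \<and> b \<in> {fst B, snd B}} + 2)"

definition edist :: "oedge \<Rightarrow> oedge \<Rightarrow> nat" where
  "edist A B = hdist_mm A B div 2"

text \<open>Node x lies on the geodesic from m(A) to m(B).\<close>
definition on_geod :: "nat list \<Rightarrow> oedge \<Rightarrow> oedge \<Rightarrow> bool" where
  "on_geod x A B \<longleftrightarrow> hdist_vm x A + hdist_vm x B = hdist_mm A B"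

definition pair_type :: "nat \<Rightarrow> nat \<Rightarrow> oedge \<Rightarrow> oedge \<Rightarrow> bool" where
  "pair_type j d A B \<longleftrightarrow> is_oedge A \<and> is_oedge B \<and>
     (if d = 0 then ((j = 1 \<or> j = 3) \<and> B = A) \<or> ((j = 2 \<or> j = 4) \<and> B = rev_edge A)
      else edist A B = d \<and>
        ((j = 1 \<and> on_geod (snd A) A B \<and> on_geod (fst B) A B) \<or>
         (j = 2 \<and> on_geod (snd A) A B \<and> on_geod (snd B) A B) \<or>
         (j = 3 \<and> on_geod (fst A) A B \<and> on_geod (snd B) A B) \<or>
         (j = 4 \<and> on_geod (fst A) A B \<and> on_geod (fst B) A B)))"

definition is_path :: "nat \<Rightarrow> oedge \<Rightarrow> oedge \<Rightarrow> oedge list \<Rightarrow> bool" where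
  "is_path k A B cs \<longleftrightarrow> length cs = Suc k \<and> cs ! 0 = A \<and> cs ! k = B \<and>
     (\<forall>i\<le>k. is_oedge (cs ! i)) \<and> (\<forall>i<k. snd (cs ! i) = fst (cs ! Suc i))"

definition inversions :: "nat \<Rightarrow> oedge list \<Rightarrow> nat" where
  "inversions k cs = card {i. i < k \<and> cs ! Suc i = rev_edge (cs ! i)}"

text \<open>Gamma_{k,r}(d,j), computed for a (chosen) pair of type j at distance d.\<close>
definition Gamma :: "nat \<Rightarrow> nat \<Rightarrow> nat \<Rightarrow> nat \<Rightarrow> nat" where
  "Gamma k r d j = (if k = 0 then (if r = 0 \<and> d = 0 \<and> (j = 1 \<or> j = 3) then 1 else 0)
     else (let AB = (SOME AB. pair_type j d (fst AB) (snd AB)) in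
           card {cs. is_path k (fst AB) (snd AB) cs \<and> inversions k cs = r}))"

text \<open>A series F is represented by F k r d = coefficient of X^k Y^r Z^d.\<close>
type_synonym ser = "nat \<Rightarrow> nat \<Rightarrow> nat \<Rightarrow> int"

definition FF :: "nat \<Rightarrow> ser" where
  "FF j = (\<lambda>k r d. int (Gamma k r d j))"

definition ser_add :: "ser \<Rightarrow> ser \<Rightarrow> ser" where
  "ser_add F G = (\<lambda>k r d. F k r d + G k r d)"

definition ser_sub :: "ser \<Rightarrow> ser \<Rightarrow> ser" where
  "ser_sub F G = (\<lambda>k r d. F k r d - G k r d)"

definition ser_neg :: "ser \<Rightarrow> ser" where
  "ser_neg F = (\<lambda>k r d. - F k r d)"

definition ser_smult :: "int \<Rightarrow> ser \<Rightarrow> ser" where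
  "ser_smult c F = (\<lambda>k r d. c * F k r d)"

definition ser_monom :: "nat \<Rightarrow> nat \<Rightarrow> nat \<Rightarrow> ser \<Rightarrow> ser" where
  "ser_monom a b c F = (\<lambda>k r d. if a \<le> k \<and> b \<le> r \<and> c \<le> d then F (k - a) (r - b) (d - c) else 0)"

definition ser_Z0 :: "ser \<Rightarrow> ser" where
  "ser_Z0 F = (\<lambda>k r d. if d = 0 then F k r 0 else 0)"

definition ser_divZ :: "ser \<Rightarrow> ser" where
  "ser_divZ F = (\<lambda>k r d. F k r (Suc d))"

definition ser_derivZ :: "ser \<Rightarrow> ser" where
  "ser_derivZ F = (\<lambda>k r d. int (Suc d) * F k r (Suc d))"

definition ser_one :: ser where
  "ser_one = (\<lambda>k r d. if k = 0 \<and> r = 0 \<and> d = 0 then 1 else 0)"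

definition Theta :: "ser \<Rightarrow> ser" where
  "Theta F = ser_sub F (ser_smult 2 (ser_monom 1 0 0 (ser_divZ (ser_sub F (ser_Z0 F)))))"

definition Theta_inv :: "ser \<Rightarrow> ser" where
  "Theta_inv G = (\<lambda>k r n. \<Sum>p\<le>k. 2 ^ p * G (k - p) r (n + p))"

definition PP :: "ser \<Rightarrow> ser" where
  "PP F = ser_add (ser_sub (ser_sub (ser_sub F (ser_monom 1 0 1 F))
            (ser_monom 2 2 0 (Theta_inv F))) (ser_monom 2 1 0 (Theta_inv F)))
          (ser_monom 2 1 0 (ser_Z0 (Theta_inv F)))"

definition QQ :: "ser \<Rightarrow> ser" where
  "QQ F = ser_smult 2 (ser_monom 2 1 0 (ser_Z0 (ser_derivZ (Theta_inv F))))"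

end

theory Submission
  imports Defs
begin

(* Vertices of the tree are reduced words, the parent of a word being its tail, so the
   distance of two words is read off from their longest common suffix.  Relative to a fixed
   oriented edge A every vertex has a level (its distance to the nearer endpoint of A) and a
   side (which endpoint that is); a vertex off A has one neighbour a level lower and two
   neighbours a level higher, all on its side, and an endpoint of A has the other endpoint
   and two neighbours of level 1 on its side.  Hence the type and distance of the pair formed
   by A and an edge entering a vertex only depend on the level and side of that vertex, and
   classifying paths by their last edge gives a recursion for Gamma_{k,r}(d,j) in k, r, d and
   j alone; in particular Gamma does not depend on the pair chosen in its definition.
   The recursions for the types 2 and 3 state Theta(F_2) = XY F_1 and Theta(F_3) = 1 + XY F_4,
   i.e. XY Theta^-1(F_1) = F_2 and XY Theta^-1(F_4) = F_3 - 1.  Substituted into P and Q,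
   the two identities become the recursions for the types 1 and 4. *)

section \<open>Distance in the tree of reduced words\<close>

fun lcp :: "'a list \<Rightarrow> 'a list \<Rightarrow> nat" where
  "lcp (x # xs) (y # ys) = (if x = y then Suc (lcp xs ys) else 0)"
| "lcp _ _ = 0"

lemma lcp_sym: "lcp xs ys = lcp ys xs"
  by (induction xs ys rule: lcp.induct) auto

lemma lcp_le_length: "lcp xs ys \<le> length xs" "lcp xs ys \<le> length ys"
  by (induction xs ys rule: lcp.induct) auto

lemma lcp_refl [simp]: "lcp xs xs = length xs"
  by (induction xs) auto

lemma lcp_take: "lcp (take n xs) ys = min n (lcp xs ys)"
proof (induction xs ys arbitrary: n rule: lcp.induct)
  case (1 x xs y ys)
  then show ?case by (cases n) auto
qed auto

lemma lcp_eq_length_iff: "lcp xs ys = length xs \<longleftrightarrow> take (length xs) ys = xs"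
  by (induction xs ys rule: lcp.induct) auto

lemma lcp_snoc:
  "lcp (xs @ [c]) ys =
     (if lcp xs ys = length xs \<and> length xs < length ys \<and> ys ! length xs = c
      then Suc (length xs) else lcp xs ys)"
proof (induction xs arbitrary: ys)
  case Nil
  then show ?case by (cases ys) auto
next
  case (Cons a xs)
  then show ?case by (cases ys) auto
qed

definition tdist :: "nat list \<Rightarrow> nat list \<Rightarrow> nat" where
  "tdist u v = length u + length v - 2 * lcp (rev u) (rev v)"

lemma tdist_sym: "tdist u v = tdist v u"
  unfolding tdist_def by (simp add: lcp_sym)

lemma lcp_rev_le: "lcp (rev u) (rev v) \<le> length u" "lcp (rev u) (rev v) \<le> length v"
  using lcp_le_length[of "rev u" "rev v"] by simp_all

lemma tdist_self [simp]: "tdist u u = 0"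
  by (simp add: tdist_def)

lemma tdist_eq_0_iff [simp]: "tdist u v = 0 \<longleftrightarrow> u = v"
proof
  assume "tdist u v = 0"
  then have "lcp (rev u) (rev v) = length u" "lcp (rev u) (rev v) = length v"
    using lcp_rev_le[of u v] unfolding tdist_def by auto
  then have "rev u = rev v"
    by (metis lcp_eq_length_iff length_rev take_all_iff order_refl)
  then show "u = v" by simp
qed simp

lemma tdist_pos_iff [simp]: "0 < tdist u v \<longleftrightarrow> u \<noteq> v"
  using tdist_eq_0_iff[of u v] by linarith

lemma tdist_tl:
  assumes "v \<noteq> []"
  shows "lcp (rev v) (rev a) = length v \<Longrightarrow> tdist (tl v) a = tdist v a + 1"
    and "lcp (rev v) (rev a) \<noteq> length v \<Longrightarrow> tdist (tl v) a + 1 = tdist v a"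
proof -
  have "rev (tl v) = take (length v - 1) (rev v)"
    using assms by (simp add: butlast_rev[symmetric] butlast_conv_take)
  then have "lcp (rev (tl v)) (rev a) = min (length v - 1) (lcp (rev v) (rev a))"
    by (simp add: lcp_take)
  then show "lcp (rev v) (rev a) = length v \<Longrightarrow> tdist (tl v) a = tdist v a + 1"
    and "lcp (rev v) (rev a) \<noteq> length v \<Longrightarrow> tdist (tl v) a + 1 = tdist v a"
    using lcp_rev_le[of v a] assms unfolding tdist_def by (cases v; auto)+
qed

lemma tdist_Cons:
  "lcp (rev v) (rev a) = length v \<and> length v < length a \<and> rev a ! length v = c \<Longrightarrow>
     tdist (c # v) a + 1 = tdist v a"
  "\<not> (lcp (rev v) (rev a) = length v \<and> length v < length a \<and> rev a ! length v = c) \<Longrightarrow>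
     tdist (c # v) a = tdist v a + 1"
  using lcp_rev_le[of v a] unfolding tdist_def by (auto simp: lcp_snoc)

lemma bvert_iff: "bvert w \<longleftrightarrow> set w \<subseteq> {0, 1, 2} \<and> distinct_adj w"
  unfolding bvert_def distinct_adj_conv_nth ..

lemma bvert_Cons: "bvert (c # v) \<longleftrightarrow> c \<le> 2 \<and> bvert v \<and> (v = [] \<or> c \<noteq> hd v)"
  unfolding bvert_iff distinct_adj_Cons by auto

lemma bvert_Nil [simp]: "bvert []"
  by (simp add: bvert_iff)

lemma bvert_appendD: "bvert (u @ v) \<Longrightarrow> bvert v"
  unfolding bvert_iff by auto

lemma badj_sym: "badj u v \<longleftrightarrow> badj v u"
  unfolding badj_def by auto

lemma badj_bvert: "badj u v \<Longrightarrow> bvert u \<and> bvert v"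
  unfolding badj_def by simp

lemma badj_neq: "badj u v \<Longrightarrow> u \<noteq> v"
  unfolding badj_def by (metis length_tl diff_less length_greater_0_conv zero_less_one less_irrefl)

definition nbrs :: "nat list \<Rightarrow> nat list set" where
  "nbrs v = {w. badj w v}"

lemma nbrs_Nil: "nbrs [] = {[0], [1], [2]}"
  unfolding nbrs_def badj_def by (auto simp: bvert_Cons neq_Nil_conv le_Suc_eq)

lemma nbrs_Cons:
  assumes "bvert (h # t)"
  shows "nbrs (h # t) = insert t ((\<lambda>c. c # h # t) ` ({..2} - {h}))"
  using assms unfolding nbrs_def badj_def by (auto simp: bvert_Cons neq_Nil_conv)

lemma card_nbrs:
  assumes "bvert v"
  shows "card (nbrs v) = 3"
proof (cases v)
  case Nil
  then show ?thesis by (simp add: nbrs_Nil)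
next
  case (Cons h t)
  have "h \<le> 2" using assms Cons by (simp add: bvert_Cons)
  then have "card ({..2::nat} - {h}) = 2" by simp
  moreover have "inj (\<lambda>c. c # h # t)" by (simp add: inj_def)
  moreover have "t \<notin> (\<lambda>c. c # h # t) ` ({..2} - {h})" by auto
  ultimately show ?thesis
    using nbrs_Cons[of h t] assms Cons by (simp add: card_image inj_on_subset)
qed

lemma finite_nbrs: "finite (nbrs v)"
proof (cases "bvert v")
  case True
  then show ?thesis using card_nbrs card.infinite by fastforce
next
  case False
  then have "nbrs v = {}" unfolding nbrs_def badj_def by simp
  then show ?thesis by simp
qed

lemma badj_cases:
  assumes "badj w v"
  obtains c where "w = c # v" | "v \<noteq> []" "w = tl v"
  using assms unfolding badj_def by (cases w) auto

lemma tdist_badj: "badj w v \<Longrightarrow> tdist w a = tdist v a + 1 \<or> tdist v a = tdist w a + 1"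
proof (elim badj_cases)
  fix c assume "w = c # v"
  then show ?thesis using tdist_Cons[of v a c] by argo
next
  assume "v \<noteq> []" "w = tl v"
  then show ?thesis using tdist_tl[of v a] by argo
qed

lemma tdist_badj_le: "badj w v \<Longrightarrow> tdist w a \<le> tdist v a + 1"
  using tdist_badj[of w v a] by linarith

lemma lcp_rev_eq_length_suffix:
  assumes "lcp (rev v) (rev a) = length v"
  obtains u where "a = u @ v"
proof
  have "take (length v) (rev a) = rev v"
    using assms lcp_eq_length_iff[of "rev v" "rev a"] by simp
  then have "rev a = rev v @ drop (length v) (rev a)"
    by (metis append_take_drop_id)
  then show "a = rev (drop (length v) (rev a)) @ v"
    by (metis rev_append rev_rev_ident)
qed

lemma ex_nbr_closer:
  assumes "bvert v" "bvert a" "v \<noteq> a"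
  shows "\<exists>w. badj w v \<and> tdist w a + 1 = tdist v a"
proof (cases "lcp (rev v) (rev a) = length v")
  case True
  then obtain u where a: "a = u @ v" by (rule lcp_rev_eq_length_suffix)
  with assms(3) have "u \<noteq> []" by auto
  then have "a = butlast u @ (last u # v)"
    using a by simp
  then have "bvert (last u # v)"
    using assms(2) bvert_appendD by metis
  moreover have "tdist (last u # v) a + 1 = tdist v a"
    using tdist_Cons(1)[of v a "last u"] True \<open>u \<noteq> []\<close> a
    by (simp add: nth_append rev_nth last_conv_nth)
  ultimately show ?thesis
    using assms(1) unfolding badj_def by auto
next
  case False
  then have "v \<noteq> []" by auto
  then have "badj (tl v) v"
    using assms(1) unfolding badj_def by (auto simp: bvert_Cons neq_Nil_conv)
  moreover have "tdist (tl v) a + 1 = tdist v a"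
    using tdist_tl(2)[OF \<open>v \<noteq> []\<close> False] .
  ultimately show ?thesis by blast
qed

lemma nbr_closer_unique:
  assumes "badj w1 v" "tdist w1 a < tdist v a" "badj w2 v" "tdist w2 a < tdist v a"
  shows "w1 = w2"
proof -
  have closer_form: "w = (if lcp (rev v) (rev a) = length v then rev a ! length v # v else tl v)"
    if "badj w v" "tdist w a < tdist v a" for w
    using that(1)
  proof (cases rule: badj_cases)
    case (1 c)
    then show ?thesis using that(2) tdist_Cons[of v a c] by auto
  next
    case 2
    then show ?thesis using that(2) tdist_tl[of v a] by auto
  qed
  show ?thesis using closer_form[OF assms(1,2)] closer_form[OF assms(3,4)] by simp
qed

lemma tdist_walk_le:
  "length ws = Suc n \<Longrightarrow> (\<forall>i<n. badj (ws ! i) (ws ! Suc i)) \<Longrightarrow>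
     tdist (hd ws) (last ws) \<le> n"
proof (induction n arbitrary: ws)
  case 0
  then show ?case by (cases ws) auto
next
  case (Suc n)
  then obtain u ws' where ws: "ws = u # ws'" by (cases ws) auto
  with Suc.prems(1) have "ws' \<noteq> []" by auto
  have "tdist (hd ws') (last ws') \<le> n"
    using Suc.prems ws \<open>ws' \<noteq> []\<close> by (intro Suc.IH) auto
  moreover have "badj u (hd ws')"
    using Suc.prems(2) ws \<open>ws' \<noteq> []\<close> by (force simp: hd_conv_nth)
  ultimately show ?case
    using tdist_badj_le[of u "hd ws'" "last ws'"] ws \<open>ws' \<noteq> []\<close> by simp
qed

lemma ex_walk_tdist:
  "bvert u \<Longrightarrow> bvert v \<Longrightarrow> tdist u v = n \<Longrightarrow>
     \<exists>ws. length ws = Suc n \<and> hd ws = u \<and> last ws = v \<and> (\<forall>i<n. badj (ws ! i) (ws ! Suc i))"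
proof (induction n arbitrary: u)
  case 0
  then show ?case by (intro exI[of _ "[u]"]) simp
next
  case (Suc n)
  then have "u \<noteq> v" by auto
  then obtain w where w: "badj w u" "tdist w v + 1 = tdist u v"
    using ex_nbr_closer[of u v] Suc.prems by blast
  then obtain ws where ws: "length ws = Suc n" "hd ws = w" "last ws = v"
      "\<forall>i<n. badj (ws ! i) (ws ! Suc i)"
    using Suc badj_bvert by fastforce
  then have "ws \<noteq> []" by auto
  then have "\<forall>i<Suc n. badj ((u # ws) ! i) ((u # ws) ! Suc i)"
    using w(1) ws by (auto simp: less_Suc_eq_0_disj hd_conv_nth badj_sym)
  then show ?case
    using ws \<open>ws \<noteq> []\<close> by (intro exI[of _ "u # ws"]) simp
qed

lemma vdist_eq_tdist: "bvert u \<Longrightarrow> bvert v \<Longrightarrow> vdist u v = tdist u v"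
  unfolding vdist_def
proof (rule Least_equality)
  show "bvert u \<Longrightarrow> bvert v \<Longrightarrow> \<exists>ws. length ws = Suc (tdist u v) \<and> hd ws = u \<and> last ws = v \<and>
          (\<forall>i<tdist u v. badj (ws ! i) (ws ! Suc i))"
    using ex_walk_tdist by blast
qed (use tdist_walk_le in fastforce)

lemma card_3_split:
  assumes "card S = 3" "a \<in> S"
  obtains x y where "distinct [a, x, y]" "S = {a, x, y}"
proof -
  have "card (S - {a}) = 2" using assms by simp
  then obtain x y where "S - {a} = {x, y}" "x \<noteq> y" by (auto simp: card_2_iff)
  then show ?thesis using assms(2) that[of x y] by auto
qed

lemma nbrs_of_far_vertex:
  assumes pq: "badj p q" and v: "bvert v" "v \<noteq> p" "v \<noteq> q" and closer: "tdist v q < tdist v p"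
  obtains w0 x y where "distinct [w0, x, y]" "nbrs v = {w0, x, y}"
    "\<forall>a\<in>{p, q}. tdist v a = tdist w0 a + 1 \<and> tdist x a = tdist v a + 1 \<and> tdist y a = tdist v a + 1"
proof -
  obtain w0 where w0: "badj w0 v" "tdist w0 q + 1 = tdist v q"
    using ex_nbr_closer v pq badj_bvert by blast
  have "tdist v p = tdist v q + 1" "tdist w0 p = tdist w0 q + 1 \<or> tdist w0 q = tdist w0 p + 1"
    using closer tdist_badj[OF pq, of v] tdist_badj[OF pq, of w0] by (auto simp: tdist_sym)
  then have w0p: "tdist w0 p + 1 = tdist v p"
    using tdist_badj[OF w0(1), of p] w0(2) by auto
  obtain x y where xy: "distinct [w0, x, y]" "nbrs v = {w0, x, y}"
    using card_3_split[OF card_nbrs[OF v(1)], of w0] w0(1) by (auto simp: nbrs_def)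
  have farther: "tdist z a = tdist v a + 1" if "z \<in> {x, y}" "a \<in> {p, q}" for z a
  proof -
    have "badj z v" "z \<noteq> w0" using that(1) xy by (auto simp: nbrs_def)
    then have "\<not> tdist z a < tdist v a"
      using nbr_closer_unique[of z v a w0] w0 w0p that(2) by auto
    then show ?thesis using tdist_badj[OF \<open>badj z v\<close>, of a] by auto
  qed
  show ?thesis using that[OF xy] farther w0 w0p by auto
qed

lemma nbrs_of_edge_end:
  assumes pq: "badj p q"
  obtains x y where "distinct [p, x, y]" "nbrs q = {p, x, y}"
    "tdist x q = 1" "tdist x p = 2" "tdist y q = 1" "tdist y p = 2"
proof -
  have "tdist q p = 1" using tdist_badj[OF pq, of q] by (auto simp: tdist_sym)
  obtain x y where xy: "distinct [p, x, y]" "nbrs q = {p, x, y}"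
    using card_3_split[OF card_nbrs, of q p] pq badj_bvert by (auto simp: nbrs_def)
  have "tdist z q = 1 \<and> tdist z p = 2" if "z \<in> {x, y}" for z
  proof -
    have "badj z q" "z \<noteq> p" using that xy by (auto simp: nbrs_def)
    then show ?thesis
      using tdist_badj[of z q q] tdist_badj[of z q p] \<open>tdist q p = 1\<close> by auto
  qed
  then show ?thesis using that[OF xy] by auto
qed

section \<open>Level and side relative to an edge\<close>

definition level :: "oedge \<Rightarrow> nat list \<Rightarrow> nat" where
  "level A x = min (tdist x (fst A)) (tdist x (snd A))"

definition head_side :: "oedge \<Rightarrow> nat list \<Rightarrow> bool" where
  "head_side A x \<longleftrightarrow> tdist x (snd A) < tdist x (fst A)"

lemma oedge_bvert: "is_oedge A \<Longrightarrow> bvert (fst A) \<and> bvert (snd A)"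
  unfolding is_oedge_def badj_def by simp

lemma oedge_neq: "is_oedge A \<Longrightarrow> fst A \<noteq> snd A"
  unfolding is_oedge_def by (rule badj_neq)

lemma tdist_oedge_ends:
  assumes "is_oedge A"
  shows "tdist x (snd A) = level A x + of_bool (\<not> head_side A x)"
    and "tdist x (fst A) = level A x + of_bool (head_side A x)"
  using assms tdist_badj[of "fst A" "snd A" x]
  unfolding is_oedge_def level_def head_side_def by (auto simp: tdist_sym)

lemma level_side_ends:
  assumes "is_oedge A"
  shows "level A (fst A) = 0" "level A (snd A) = 0" "head_side A (snd A)" "\<not> head_side A (fst A)"
proof -
  have "tdist (fst A) (snd A) > 0" "tdist (snd A) (fst A) > 0"
    using oedge_neq[OF assms] by simp_all
  then show "level A (fst A) = 0" "level A (snd A) = 0" "head_side A (snd A)" "\<not> head_side A (fst A)"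
    unfolding level_def head_side_def by auto
qed

lemma nbrs_head:
  assumes "is_oedge A"
  obtains x y where "distinct [fst A, x, y]" "nbrs (snd A) = {fst A, x, y}"
    "level A x = 1" "level A y = 1" "head_side A x" "head_side A y"
proof -
  obtain x y where "distinct [fst A, x, y]" "nbrs (snd A) = {fst A, x, y}"
    "tdist x (snd A) = 1" "tdist x (fst A) = 2" "tdist y (snd A) = 1" "tdist y (fst A) = 2"
    using nbrs_of_edge_end[of "fst A" "snd A"] assms unfolding is_oedge_def by blast
  then show ?thesis using that[of x y] unfolding level_def head_side_def by simp
qed

lemma nbrs_tail:
  assumes "is_oedge A"
  obtains x y where "distinct [snd A, x, y]" "nbrs (fst A) = {snd A, x, y}"
    "level A x = 1" "level A y = 1" "\<not> head_side A x" "\<not> head_side A y"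
proof -
  obtain x y where "distinct [snd A, x, y]" "nbrs (fst A) = {snd A, x, y}"
    "tdist x (fst A) = 1" "tdist x (snd A) = 2" "tdist y (fst A) = 1" "tdist y (snd A) = 2"
    using nbrs_of_edge_end[of "snd A" "fst A"] assms badj_sym unfolding is_oedge_def by blast
  then show ?thesis using that[of x y] unfolding level_def head_side_def by simp
qed

lemma nbrs_off_edge:
  assumes A: "is_oedge A" and v: "bvert v" "v \<noteq> fst A" "v \<noteq> snd A"
  obtains w0 x y where "distinct [w0, x, y]" "nbrs v = {w0, x, y}"
    "level A w0 + 1 = level A v" "level A x = level A v + 1" "level A y = level A v + 1"
    "head_side A w0 = head_side A v" "head_side A x = head_side A v" "head_side A y = head_side A v"
proof -
  have pq: "badj (fst A) (snd A)" "badj (snd A) (fst A)"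
    using A badj_sym unfolding is_oedge_def by auto
  show ?thesis
  proof (cases "head_side A v")
    case True
    then have "tdist v (snd A) < tdist v (fst A)" unfolding head_side_def .
    from nbrs_of_far_vertex[OF pq(1) v this] obtain w0 x y where "distinct [w0, x, y]"
      "nbrs v = {w0, x, y}" "\<forall>a\<in>{fst A, snd A}. tdist v a = tdist w0 a + 1 \<and>
        tdist x a = tdist v a + 1 \<and> tdist y a = tdist v a + 1" .
    then show ?thesis using that[of w0 x y] unfolding level_def head_side_def by (auto simp: min_def)
  next
    case False
    then have "tdist v (fst A) < tdist v (snd A)"
      using tdist_oedge_ends[OF A, of v] by simp
    from nbrs_of_far_vertex[OF pq(2) v(1,3,2) this] obtain w0 x y where "distinct [w0, x, y]"
      "nbrs v = {w0, x, y}" "\<forall>a\<in>{snd A, fst A}. tdist v a = tdist w0 a + 1 \<and>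
        tdist x a = tdist v a + 1 \<and> tdist y a = tdist v a + 1" .
    then show ?thesis using that[of w0 x y] unfolding level_def head_side_def by (auto simp: min_def)
  qed
qed

lemma is_oedge_rev_edge [simp]: "is_oedge (rev_edge A) \<longleftrightarrow> is_oedge A"
  unfolding is_oedge_def rev_edge_def using badj_sym by simp

lemma same_endpoints_oedge:
  "{fst A, snd A} = {fst B, snd B} \<Longrightarrow> B = A \<or> B = rev_edge A"
  unfolding rev_edge_def by (cases A; cases B) (auto simp: doubleton_eq_iff)

lemma level_side_oedge:
  assumes A: "is_oedge A" and B: "is_oedge B" and ne: "{fst A, snd A} \<noteq> {fst B, snd B}"
  shows "head_side A (snd B) = head_side A (fst B)"
    and "level A (snd B) = level A (fst B) + 1 \<or> level A (fst B) = level A (snd B) + 1"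
proof -
  have "snd B \<in> nbrs (fst B)" using B badj_sym unfolding is_oedge_def nbrs_def by simp
  moreover have "bvert (fst B)" using oedge_bvert[OF B] by simp
  ultimately have "head_side A (snd B) = head_side A (fst B) \<and>
    (level A (snd B) = level A (fst B) + 1 \<or> level A (fst B) = level A (snd B) + 1)"
  proof (cases "fst B = fst A \<or> fst B = snd A")
    case True
    with ne oedge_neq[OF B] have "snd B \<noteq> fst A" "snd B \<noteq> snd A" by auto
    with True \<open>snd B \<in> nbrs (fst B)\<close> show ?thesis
      using nbrs_head[OF A] nbrs_tail[OF A] level_side_ends[OF A] by (elim disjE; auto)
  next
    case False
    then obtain w0 x y where "nbrs (fst B) = {w0, x, y}"
      "level A w0 + 1 = level A (fst B)" "level A x = level A (fst B) + 1" "level A y = level A (fst B) + 1"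
      "head_side A w0 = head_side A (fst B)" "head_side A x = head_side A (fst B)"
      "head_side A y = head_side A (fst B)"
      using nbrs_off_edge[OF A \<open>bvert (fst B)\<close>] by metis
    with \<open>snd B \<in> nbrs (fst B)\<close> show ?thesis by auto
  qed
  then show "head_side A (snd B) = head_side A (fst B)"
    and "level A (snd B) = level A (fst B) + 1 \<or> level A (fst B) = level A (snd B) + 1"
    by simp_all
qed

lemma hdist_vm_eq:
  assumes "bvert x" "is_oedge A"
  shows "hdist_vm x A = 2 * level A x + 1"
  using assms oedge_bvert[of A] unfolding hdist_vm_def level_def by (simp add: vdist_eq_tdist)

lemma hdist_mm_eq:
  assumes A: "is_oedge A" and B: "is_oedge B" and ne: "{fst A, snd A} \<noteq> {fst B, snd B}"
  shows "hdist_mm A B = 2 * min (level A (fst B)) (level A (snd B)) + 2"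
proof -
  have set4: "{f a b | a b. a \<in> {p, q} \<and> b \<in> {r, s}} = {f p r, f p s, f q r, f q s}"
    for f :: "nat list \<Rightarrow> nat list \<Rightarrow> nat" and p q r s by blast
  have "{vdist a b | a b. a \<in> {fst A, snd A} \<and> b \<in> {fst B, snd B}} =
      {tdist (fst B) (fst A), tdist (fst B) (snd A), tdist (snd B) (fst A), tdist (snd B) (snd A)}"
    unfolding set4 using oedge_bvert[OF A] oedge_bvert[OF B]
    by (simp add: vdist_eq_tdist tdist_sym insert_commute)
  then show ?thesis
    using ne unfolding hdist_mm_def level_def by (simp add: min.assoc)
qed

lemma edist_eq:
  assumes "is_oedge A" "is_oedge B" "{fst A, snd A} \<noteq> {fst B, snd B}"
  shows "edist A B = Suc (min (level A (fst B)) (level A (snd B)))"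
  unfolding edist_def hdist_mm_eq[OF assms] by simp

lemma on_geod_oedge:
  assumes A: "is_oedge A" and B: "is_oedge B" and ne: "{fst A, snd A} \<noteq> {fst B, snd B}"
  shows "on_geod (fst B) A B \<longleftrightarrow> level A (fst B) \<le> level A (snd B)"
    and "on_geod (snd B) A B \<longleftrightarrow> level A (snd B) \<le> level A (fst B)"
    and "on_geod (snd A) A B \<longleftrightarrow> head_side A (fst B)"
    and "on_geod (fst A) A B \<longleftrightarrow> \<not> head_side A (fst B)"
proof -
  have bv: "bvert (fst A)" "bvert (snd A)" "bvert (fst B)" "bvert (snd B)"
    using oedge_bvert A B by auto
  have lB: "level B x = min (tdist (fst B) x) (tdist (snd B) x)" for x
    unfolding level_def by (simp add: tdist_sym)
  note ends = level_side_ends[OF A] level_side_ends[OF B] level_side_oedge(1)[OF A B ne]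
  have vm: "hdist_vm x C = 2 * level C x + 1" if "bvert x" "C \<in> {A, B}" for x C
    using hdist_vm_eq[OF that(1)] that(2) A B by blast
  note eqs = on_geod_def hdist_mm_eq[OF A B ne] vm bv
  show "on_geod (fst B) A B \<longleftrightarrow> level A (fst B) \<le> level A (snd B)"
    and "on_geod (snd B) A B \<longleftrightarrow> level A (snd B) \<le> level A (fst B)"
    using ends by (auto simp: eqs)
  show "on_geod (snd A) A B \<longleftrightarrow> head_side A (fst B)"
    and "on_geod (fst A) A B \<longleftrightarrow> \<not> head_side A (fst B)"
    using ends by (auto simp: eqs lB tdist_oedge_ends[OF A])
qed

lemma pair_type_off_edge:
  assumes A: "is_oedge A" and B: "is_oedge B" and ne: "{fst A, snd A} \<noteq> {fst B, snd B}"
  shows "pair_type j d A B \<longleftrightarrow> d = Suc (min (level A (fst B)) (level A (snd B))) \<and>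
    (j = 1 \<and> head_side A (fst B) \<and> level A (fst B) < level A (snd B) \<or>
     j = 2 \<and> head_side A (fst B) \<and> level A (snd B) < level A (fst B) \<or>
     j = 3 \<and> \<not> head_side A (fst B) \<and> level A (snd B) < level A (fst B) \<or>
     j = 4 \<and> \<not> head_side A (fst B) \<and> level A (fst B) < level A (snd B))"
proof -
  have "level A (fst B) \<noteq> level A (snd B)" using level_side_oedge(2)[OF assms] by auto
  moreover have "B \<noteq> A" "B \<noteq> rev_edge A" using ne unfolding rev_edge_def by auto
  ultimately show ?thesis
    unfolding pair_type_def edist_eq[OF assms] on_geod_oedge[OF assms] using A B by auto
qed

lemma pair_type_self: "is_oedge A \<Longrightarrow> pair_type j d A A \<longleftrightarrow> d = 0 \<and> (j = 1 \<or> j = 3)"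
  using oedge_neq[of A] unfolding pair_type_def edist_def hdist_mm_def rev_edge_def
  by (cases A) auto

lemma pair_type_rev_self:
  "is_oedge A \<Longrightarrow> pair_type j d A (rev_edge A) \<longleftrightarrow> d = 0 \<and> (j = 2 \<or> j = 4)"
  using oedge_neq[of A] is_oedge_rev_edge[of A]
  unfolding pair_type_def edist_def hdist_mm_def rev_edge_def by (cases A) (auto simp: insert_commute)

definition rev_type :: "nat \<Rightarrow> nat" where
  "rev_type j = (if j = 1 then 2 else if j = 2 then 1 else if j = 3 then 4 else 3)"

lemma edist_rev_edge: "edist A (rev_edge B) = edist A B"
  unfolding edist_def hdist_mm_def rev_edge_def by (simp add: insert_commute conj_commute)

lemma on_geod_rev_edge: "on_geod x A (rev_edge B) = on_geod x A B"
  unfolding on_geod_def hdist_mm_def hdist_vm_def rev_edge_def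
  by (simp add: insert_commute conj_commute min.commute)

lemma rev_edge_rev_edge [simp]: "rev_edge (rev_edge A) = A"
  unfolding rev_edge_def by simp

lemma rev_edge_eq_iff: "rev_edge B = C \<longleftrightarrow> B = rev_edge C"
  unfolding rev_edge_def by auto

lemma pair_type_rev_edge:
  assumes "pair_type j d A B"
  shows "pair_type (rev_type j) d A (rev_edge B)"
proof (cases "d = 0")
  case True
  then show ?thesis using assms unfolding pair_type_def rev_type_def rev_edge_eq_iff by auto
next
  case False
  have "fst (rev_edge B) = snd B" "snd (rev_edge B) = fst B" unfolding rev_edge_def by simp_all
  with False show ?thesis using assms
    unfolding pair_type_def rev_type_def edist_rev_edge on_geod_rev_edge by auto
qed

lemma is_oedge_nbr: "w \<in> nbrs v \<Longrightarrow> is_oedge (w, v)"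
  unfolding nbrs_def is_oedge_def by simp

lemma pair_type_unique:
  assumes A: "is_oedge A" and "pair_type j d A B" "pair_type j' d' A B"
  shows "d' = d \<and> (j' = j \<or> d = 0 \<and> (j = 1 \<or> j = 3) \<and> (j' = 1 \<or> j' = 3) \<or>
    d = 0 \<and> (j = 2 \<or> j = 4) \<and> (j' = 2 \<or> j' = 4))"
proof -
  have B: "is_oedge B" using assms(2) unfolding pair_type_def by simp
  show ?thesis
  proof (cases "{fst A, snd A} = {fst B, snd B}")
    case True
    then consider "B = A" | "B = rev_edge A" using same_endpoints_oedge by blast
    then show ?thesis
      using assms pair_type_self[OF A] pair_type_rev_self[OF A] by cases auto
  next
    case False
    show ?thesis using assms(2,3) unfolding pair_type_off_edge[OF A B False] by auto
  qed
qed

text \<open>The neighbour \<open>w0\<close> is the one nearer to \<open>A\<close>; at an endpoint of \<open>A\<close> it is the other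
  endpoint, and \<open>(w0, v)\<close> is \<open>A\<close> or its reverse.\<close>

lemma nbrs_pair_types:
  assumes A: "is_oedge A" and v: "bvert v"
  obtains w0 x y where "distinct [w0, x, y]" "nbrs v = {w0, x, y}"
    "pair_type (if head_side A v then 1 else 4) (level A v) A (w0, v)"
    "pair_type (if head_side A v then 2 else 3) (Suc (level A v)) A (x, v)"
    "pair_type (if head_side A v then 2 else 3) (Suc (level A v)) A (y, v)"
proof -
  note ends = level_side_ends[OF A]
  have up: "pair_type (if head_side A v then 2 else 3) (Suc (level A v)) A (z, v)"
    if "z \<in> nbrs v" "level A z = Suc (level A v)" "head_side A z = head_side A v" for z
  proof -
    have "is_oedge (z, v)" using that(1) by (rule is_oedge_nbr)
    moreover have "{fst A, snd A} \<noteq> {z, v}" using that(2) ends by (auto simp: doubleton_eq_iff)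
    ultimately show ?thesis using pair_type_off_edge[OF A] that by auto
  qed
  consider "v = snd A" | "v = fst A" | "v \<noteq> fst A" "v \<noteq> snd A" by blast
  then show ?thesis
  proof cases
    case 1
    obtain x y where "distinct [fst A, x, y]" "nbrs v = {fst A, x, y}"
        "level A x = 1" "level A y = 1" "head_side A x" "head_side A y"
      using nbrs_head[OF A] 1 by metis
    moreover have "pair_type 1 0 A (fst A, v)"
      using pair_type_self[OF A] 1 by simp
    ultimately show ?thesis using that[of "fst A" x y] up[of x] up[of y] 1 ends by simp
  next
    case 2
    obtain x y where "distinct [snd A, x, y]" "nbrs v = {snd A, x, y}"
        "level A x = 1" "level A y = 1" "\<not> head_side A x" "\<not> head_side A y"
      using nbrs_tail[OF A] 2 by metis
    moreover have "pair_type 4 0 A (snd A, v)"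
      using pair_type_rev_self[OF A] 2 by (simp add: rev_edge_def)
    ultimately show ?thesis using that[of "snd A" x y] up[of x] up[of y] 2 ends by simp
  next
    case 3
    obtain w0 x y where nb: "distinct [w0, x, y]" "nbrs v = {w0, x, y}"
      "level A w0 + 1 = level A v" "level A x = level A v + 1" "level A y = level A v + 1"
      "head_side A w0 = head_side A v" "head_side A x = head_side A v" "head_side A y = head_side A v"
      using nbrs_off_edge[OF A v 3] by metis
    have "is_oedge (w0, v)" using nb(2) is_oedge_nbr by simp
    moreover have "{fst A, snd A} \<noteq> {w0, v}" using 3 by (auto simp: doubleton_eq_iff)
    ultimately have "pair_type (if head_side A v then 1 else 4) (level A v) A (w0, v)"
      using pair_type_off_edge[OF A] nb by auto
    then show ?thesis using that[of w0 x y] up[of x] up[of y] nb by simp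
  qed
qed

section \<open>Counting paths by their last edge\<close>

lemma inversions_snoc:
  assumes "length cs = Suc k"
  shows "inversions (Suc k) (cs @ [B]) = inversions k cs + of_bool (B = rev_edge (cs ! k))"
proof -
  have "{i. i < Suc k \<and> (cs @ [B]) ! Suc i = rev_edge ((cs @ [B]) ! i)} =
        {i. i < k \<and> cs ! Suc i = rev_edge (cs ! i)} \<union> (if B = rev_edge (cs ! k) then {k} else {})"
    using assms by (auto simp: nth_append less_Suc_eq)
  then show ?thesis unfolding inversions_def by simp
qed

lemma is_path_0_iff: "is_path 0 A C cs \<longleftrightarrow> cs = [A] \<and> C = A \<and> is_oedge A"
  unfolding is_path_def by (cases cs) auto

lemma is_path_snoc_iff:
  assumes len: "length cs = Suc k"
  shows "is_path (Suc k) A B (cs @ [B']) \<longleftrightarrow>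
     B' = B \<and> is_path k A (cs ! k) cs \<and> is_oedge B \<and> snd (cs ! k) = fst B"
proof -
  have "(\<forall>i\<le>Suc k. is_oedge ((cs @ [B']) ! i)) \<longleftrightarrow> (\<forall>i\<le>k. is_oedge (cs ! i)) \<and> is_oedge B'"
    using len by (simp add: le_Suc_eq nth_append all_conj_distrib disj_imp less_Suc_eq_le)
  moreover have "(\<forall>i<Suc k. snd ((cs @ [B']) ! i) = fst ((cs @ [B']) ! Suc i)) \<longleftrightarrow>
      (\<forall>i<k. snd (cs ! i) = fst (cs ! Suc i)) \<and> snd (cs ! k) = fst B'"
    using len by (simp add: All_less_Suc nth_append conj_commute)
  moreover have "(cs @ [B']) ! 0 = cs ! 0" "(cs @ [B']) ! Suc k = B'"
    using len by (simp_all add: nth_append)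
  ultimately show ?thesis
    using len unfolding is_path_def by auto
qed

lemma is_path_Suc_iff:
  "is_path (Suc k) A B xs \<longleftrightarrow>
     (\<exists>cs w. xs = cs @ [B] \<and> is_path k A (w, fst B) cs \<and> is_oedge B \<and> w \<in> nbrs (fst B))"
proof
  assume p: "is_path (Suc k) A B xs"
  then have len: "length xs = Suc (Suc k)" unfolding is_path_def by simp
  then obtain cs B' where xs: "xs = cs @ [B']" and len_cs: "length cs = Suc k"
    by (metis append_butlast_last_id length_butlast length_greater_0_conv zero_less_Suc diff_Suc_1)
  have "is_path k A (cs ! k) cs" "is_oedge B" "snd (cs ! k) = fst B" "B' = B"
    using p unfolding xs is_path_snoc_iff[OF len_cs] by simp_all
  moreover have "is_oedge (cs ! k)"
    using \<open>is_path k A (cs ! k) cs\<close> unfolding is_path_def by simp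
  moreover have "cs ! k = (fst (cs ! k), fst B)"
    using \<open>snd (cs ! k) = fst B\<close> by (metis prod.collapse)
  ultimately show "\<exists>cs w. xs = cs @ [B] \<and> is_path k A (w, fst B) cs \<and> is_oedge B \<and> w \<in> nbrs (fst B)"
    using xs unfolding is_oedge_def nbrs_def
    by (intro exI[of _ cs] exI[of _ "fst (cs ! k)"]) (auto simp: badj_sym)
next
  assume "\<exists>cs w. xs = cs @ [B] \<and> is_path k A (w, fst B) cs \<and> is_oedge B \<and> w \<in> nbrs (fst B)"
  then obtain cs w where "xs = cs @ [B]" "is_path k A (w, fst B) cs" "is_oedge B"
    by blast
  moreover from this have "length cs = Suc k" "cs ! k = (w, fst B)" unfolding is_path_def by auto
  ultimately show "is_path (Suc k) A B xs" using is_path_snoc_iff by simp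
qed

lemma finite_paths: "finite {cs. is_path k A C cs}"
proof (induction k arbitrary: C)
  case 0
  have "{cs. is_path 0 A C cs} \<subseteq> {[A]}" by (auto simp: is_path_0_iff)
  then show ?case by (rule finite_subset) simp
next
  case (Suc k)
  have "{cs. is_path (Suc k) A C cs} \<subseteq>
      (\<Union>w\<in>nbrs (fst C). (\<lambda>cs. cs @ [C]) ` {cs. is_path k A (w, fst C) cs})"
    by (auto simp: is_path_Suc_iff)
  then show ?case using Suc.IH finite_nbrs by (auto intro: finite_subset)
qed

definition npaths :: "nat \<Rightarrow> oedge \<Rightarrow> oedge \<Rightarrow> nat \<Rightarrow> nat" where
  "npaths k A B r = card {cs. is_path k A B cs \<and> inversions k cs = r}"

lemma npaths_Suc:
  assumes B: "is_oedge B"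
  shows "npaths (Suc k) A B r = (\<Sum>w\<in>nbrs (fst B).
     if w = snd B then (if r = 0 then 0 else npaths k A (w, fst B) (r - 1)) else npaths k A (w, fst B) r)"
proof -
  define S where
    "S w = {cs. is_path k A (w, fst B) cs \<and> inversions k cs + of_bool (w = snd B) = r}" for w
  have inv: "inversions (Suc k) (cs @ [B]) = inversions k cs + of_bool (w = snd B)"
    if "is_path k A (w, fst B) cs" for w cs
  proof -
    have "length cs = Suc k" "cs ! k = (w, fst B)" using that unfolding is_path_def by auto
    moreover have "B = rev_edge (w, fst B) \<longleftrightarrow> w = snd B"
      unfolding rev_edge_def by (cases B) auto
    ultimately show ?thesis by (simp add: inversions_snoc)
  qed
  have "{cs. is_path (Suc k) A B cs \<and> inversions (Suc k) cs = r} =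
      (\<Union>w\<in>nbrs (fst B). (\<lambda>cs. cs @ [B]) ` S w)"
    unfolding S_def using B inv by (auto simp: is_path_Suc_iff)
  moreover have "finite (S w)" for w
    using finite_paths[of k A "(w, fst B)"] unfolding S_def by (rule finite_subset[rotated]) auto
  moreover have "(\<lambda>cs. cs @ [B]) ` S w1 \<inter> (\<lambda>cs. cs @ [B]) ` S w2 = {}" if "w1 \<noteq> w2" for w1 w2
    using that unfolding S_def is_path_def by auto
  moreover have "card ((\<lambda>cs. cs @ [B]) ` S w) = card (S w)" for w
    by (simp add: card_image inj_on_def)
  moreover have "card (S w) =
      (if w = snd B then (if r = 0 then 0 else npaths k A (w, fst B) (r - 1)) else npaths k A (w, fst B) r)"
    for w unfolding S_def npaths_def by (cases r) auto
  ultimately show ?thesis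
    unfolding npaths_def using finite_nbrs by (simp add: card_UN_disjoint)
qed

text \<open>Counting paths by their last edge, where reversing the last edge costs an inversion.
  At distance 0 the types 1 and 3 (and 2 and 4) describe the same pair.\<close>

fun gamma_rec :: "nat \<Rightarrow> nat \<Rightarrow> nat \<Rightarrow> nat \<Rightarrow> nat" where
  "gamma_rec 0 r d j = of_bool (r = 0 \<and> d = 0 \<and> (j = 1 \<or> j = 3))"
| "gamma_rec (Suc k) r d j =
    (if d = 0 then
      (if j = 1 \<or> j = 3
       then (if r = 0 then 0 else gamma_rec k (r - 1) 0 2) + 2 * gamma_rec k r 1 3
       else (if r = 0 then 0 else gamma_rec k (r - 1) 0 1) + 2 * gamma_rec k r 1 2)
     else if j = 1
     then (if r = 0 then 0 else gamma_rec k (r - 1) d 2) + gamma_rec k r (d - 1) 1 + gamma_rec k r d 2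
     else if j = 2
     then (if r = 0 then 0 else gamma_rec k (r - 1) d 1) + 2 * gamma_rec k r (Suc d) 2
     else if j = 3
     then (if r = 0 then 0 else gamma_rec k (r - 1) d 4) + 2 * gamma_rec k r (Suc d) 3
     else (if r = 0 then 0 else gamma_rec k (r - 1) d 3) + gamma_rec k r (d - 1) 4 + gamma_rec k r d 3)"

definition gamma_rec_Y :: "nat \<Rightarrow> nat \<Rightarrow> nat \<Rightarrow> nat \<Rightarrow> nat" where
  "gamma_rec_Y k r d j = (if r = 0 then 0 else gamma_rec k (r - 1) d j)"

lemma gamma_rec_dist_0:
  "gamma_rec k r 0 1 = gamma_rec k r 0 3" "gamma_rec k r 0 2 = gamma_rec k r 0 4"
  by (cases k; simp)+

lemma gamma_rec_toward:
  "j = 2 \<or> j = 3 \<Longrightarrow>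
     gamma_rec (Suc k) r d j = gamma_rec_Y k r d (rev_type j) + 2 * gamma_rec k r (Suc d) j"
  unfolding gamma_rec_Y_def rev_type_def by (auto simp: gamma_rec_dist_0)

lemma gamma_rec_away:
  "j = 1 \<or> j = 4 \<Longrightarrow> d \<noteq> 0 \<Longrightarrow>
     gamma_rec (Suc k) r d j =
       gamma_rec_Y k r d (rev_type j) + gamma_rec k r (d - 1) j + gamma_rec k r d (rev_type j)"
  unfolding gamma_rec_Y_def rev_type_def by auto

declare gamma_rec.simps(2) [simp del]

lemma gamma_rec_pair_type_cong:
  assumes "is_oedge A" "pair_type j d A B" "pair_type j' d' A B"
  shows "gamma_rec k r d' j' = gamma_rec k r d j"
  using pair_type_unique[OF assms] gamma_rec_dist_0 by auto

lemma npaths_Suc_pair_type: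
  assumes A: "is_oedge A" and B: "is_oedge B"
    and IH: "\<And>C j d r. pair_type j d A C \<Longrightarrow> npaths k A C r = gamma_rec k r d j"
  obtains j d where "pair_type j d A B" "npaths (Suc k) A B r = gamma_rec (Suc k) r d j"
proof -
  let ?v = "fst B" and ?s = "head_side A (fst B)" and ?l = "level A (fst B)"
  let ?jd = "if ?s then 1 else 4 :: nat" and ?ju = "if ?s then 2 else 3 :: nat"
  have rev: "rev_type ?jd = ?ju" "rev_type ?ju = ?jd" unfolding rev_type_def by simp_all
  have B_rev: "B = rev_edge (snd B, ?v)" unfolding rev_edge_def by simp
  have sB: "snd B \<in> nbrs ?v" using B badj_sym unfolding is_oedge_def nbrs_def by auto
  obtain w0 x y where nb: "distinct [w0, x, y]" "nbrs ?v = {w0, x, y}"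
      "pair_type ?jd ?l A (w0, ?v)" "pair_type ?ju (Suc ?l) A (x, ?v)" "pair_type ?ju (Suc ?l) A (y, ?v)"
    using nbrs_pair_types[OF A] oedge_bvert[OF B] by metis
  define T where "T w = (if w = snd B then (if r = 0 then 0 else npaths k A (w, ?v) (r - 1))
                 else npaths k A (w, ?v) r)" for w
  have sum_T: "npaths (Suc k) A B r = T a + T b + T c" if "distinct [a, b, c]" "nbrs ?v = {a, b, c}"
    for a b c using npaths_Suc[OF B, of k A r] that unfolding T_def by simp
  have T_in: "T (snd B) = gamma_rec_Y k r d j" if "pair_type j d A (snd B, ?v)" for j d
    using IH[OF that] unfolding T_def gamma_rec_Y_def by simp
  have T_out: "T z = gamma_rec k r d j" if "z \<noteq> snd B" "pair_type j d A (z, ?v)" for z j d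
    using IH[OF that(2)] that(1) unfolding T_def by simp
  consider "snd B = w0"
    | z where "distinct [w0, snd B, z]" "nbrs ?v = {w0, snd B, z}"
        "pair_type ?ju (Suc ?l) A (snd B, ?v)" "pair_type ?ju (Suc ?l) A (z, ?v)"
    using sB nb by auto
  then show ?thesis
  proof cases
    case 1
    have "npaths (Suc k) A B r = T w0 + T x + T y"
      using sum_T nb(1,2) .
    also have "\<dots> = gamma_rec_Y k r ?l ?jd + 2 * gamma_rec k r (Suc ?l) ?ju"
      using T_in[of ?jd ?l] T_out[OF _ nb(4)] T_out[OF _ nb(5)] nb(1,3) 1 by auto
    also have "\<dots> = gamma_rec (Suc k) r ?l ?ju"
      using gamma_rec_toward[of ?ju k r ?l] rev by simp
    finally show ?thesis
      using that pair_type_rev_edge[OF nb(3)] B_rev 1 rev by simp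
  next
    case (2 z)
    have "npaths (Suc k) A B r = T w0 + T (snd B) + T z"
      using sum_T 2(1,2) .
    also have "\<dots> = gamma_rec_Y k r (Suc ?l) ?ju + gamma_rec k r ?l ?jd + gamma_rec k r (Suc ?l) ?ju"
      using T_in[OF 2(3)] T_out[OF _ nb(3)] T_out[OF _ 2(4)] 2(1) by auto
    also have "\<dots> = gamma_rec (Suc k) r (Suc ?l) ?jd"
      using gamma_rec_away[of ?jd "Suc ?l" k r] rev by simp
    finally show ?thesis
      using that pair_type_rev_edge[OF 2(3)] B_rev rev by simp
  qed
qed

theorem npaths_eq_gamma_rec:
  assumes A: "is_oedge A"
  shows "pair_type j d A B \<Longrightarrow> npaths k A B r = gamma_rec k r d j"
proof (induction k arbitrary: B r d j)
  case 0
  have "{cs. is_path 0 A B cs \<and> inversions 0 cs = r} = (if B = A \<and> r = 0 then {[A]} else {})"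
    using A by (auto simp: is_path_0_iff inversions_def)
  moreover have "B = A \<longleftrightarrow> d = 0 \<and> (j = 1 \<or> j = 3)"
  proof
    assume "B = A"
    then show "d = 0 \<and> (j = 1 \<or> j = 3)" using 0 pair_type_self[OF A] by simp
  next
    assume "d = 0 \<and> (j = 1 \<or> j = 3)"
    then show "B = A" using 0 unfolding pair_type_def by auto
  qed
  ultimately show ?case unfolding npaths_def by auto
next
  case (Suc k)
  have "is_oedge B" using Suc.prems unfolding pair_type_def by simp
  then obtain j' d' where "pair_type j' d' A B" "npaths (Suc k) A B r = gamma_rec (Suc k) r d' j'"
    using npaths_Suc_pair_type[OF A _ Suc.IH] by blast
  then show ?case using gamma_rec_pair_type_cong[OF A Suc.prems] by simp
qed

lemma ex_oedge: "is_oedge ([0], [])"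
  unfolding is_oedge_def badj_def by (simp add: bvert_Cons)

lemma ex_pair_type_away:
  assumes A: "is_oedge A"
  shows "\<exists>B. pair_type (if s then 1 else 4) d A B"
proof (induction d)
  case 0
  show ?case
  proof (cases s)
    case True
    then show ?thesis using pair_type_self[OF A] by (intro exI[of _ A]) simp
  next
    case False
    then show ?thesis using pair_type_rev_self[OF A] by (intro exI[of _ "rev_edge A"]) simp
  qed
next
  case (Suc d)
  let ?jd = "\<lambda>s. if s then 1 else 4 :: nat" and ?ju = "\<lambda>s. if s then 2 else 3 :: nat"
  from Suc.IH obtain B where B: "pair_type (?jd s) d A B" by blast
  then have "is_oedge B" unfolding pair_type_def by simp
  let ?v = "snd B" and ?sv = "head_side A (snd B)" and ?lv = "level A (snd B)"
  obtain w0 x y where nb: "nbrs ?v = {w0, x, y}" "pair_type (?jd ?sv) ?lv A (w0, ?v)"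
      "pair_type (?ju ?sv) (Suc ?lv) A (x, ?v)" "pair_type (?ju ?sv) (Suc ?lv) A (y, ?v)"
    using nbrs_pair_types[OF A] oedge_bvert[OF \<open>is_oedge B\<close>] by metis
  have B_eq: "B = (fst B, ?v)" by simp
  have "fst B \<in> nbrs ?v"
    using \<open>is_oedge B\<close> unfolding is_oedge_def nbrs_def by simp
  moreover have "fst B \<noteq> z" if "z \<in> {x, y}" for z
  proof
    assume "fst B = z"
    then have "pair_type (?ju ?sv) (Suc ?lv) A B" using that nb(3,4) B_eq by auto
    from pair_type_unique[OF A B this] show False by (auto split: if_splits)
  qed
  ultimately have "fst B = w0" using nb(1) by blast
  then have "pair_type (?jd ?sv) ?lv A B" using nb(2) B_eq by simp
  from pair_type_unique[OF A B this] have "?lv = d \<and> ?sv = s" by (auto split: if_splits)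
  then have "pair_type (?jd s) (Suc d) A (rev_edge (x, ?v))"
    using pair_type_rev_edge[OF nb(3)] unfolding rev_type_def by auto
  then show ?case by blast
qed

lemma Gamma_eq_gamma_rec:
  assumes "j = 1 \<or> j = 4"
  shows "Gamma k r d j = gamma_rec k r d j"
proof (cases k)
  case 0
  then show ?thesis unfolding Gamma_def by simp
next
  case (Suc k')
  define AB where "AB = (SOME AB. pair_type j d (fst AB) (snd AB))"
  obtain B where "pair_type j d ([0], []) B"
    using ex_pair_type_away[OF ex_oedge, of "j = 1" d] assms by auto
  then have "\<exists>AB. pair_type j d (fst AB) (snd AB)" by (intro exI[of _ "(([0], []), B)"]) simp
  from someI_ex[OF this] have AB: "pair_type j d (fst AB) (snd AB)" unfolding AB_def .
  then have "is_oedge (fst AB)" unfolding pair_type_def by simp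
  from npaths_eq_gamma_rec[OF this AB] have "npaths k (fst AB) (snd AB) r = gamma_rec k r d j" .
  then show ?thesis
    using Suc unfolding Gamma_def npaths_def Let_def AB_def[symmetric] by simp
qed

section \<open>Generating functions\<close>

lemma Theta_inv_0: "Theta_inv G 0 r n = G 0 r n"
  unfolding Theta_inv_def by simp

lemma Theta_inv_Suc: "Theta_inv G (Suc k) r n = G (Suc k) r n + 2 * Theta_inv G k r (Suc n)"
proof -
  have "Theta_inv G (Suc k) r n =
      G (Suc k) r n + (\<Sum>p\<le>k. 2 ^ Suc p * G (Suc k - Suc p) r (n + Suc p))"
    unfolding Theta_inv_def by (subst sum.atMost_Suc_shift) simp
  also have "(\<Sum>p\<le>k. 2 ^ Suc p * G (Suc k - Suc p) r (n + Suc p)) = 2 * Theta_inv G k r (Suc n)"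
    unfolding Theta_inv_def by (simp add: sum_distrib_left mult.assoc)
  finally show ?thesis .
qed

lemma Theta_inv_Theta: "Theta_inv (Theta F) = F"
proof (intro ext)
  fix k r n
  show "Theta_inv (Theta F) k r n = F k r n"
  proof (induction k arbitrary: n)
    case 0
    then show ?case
      by (simp add: Theta_inv_0 Theta_def ser_sub_def ser_smult_def ser_monom_def)
  next
    case (Suc k)
    then show ?case
      by (simp add: Theta_inv_Suc Theta_def ser_sub_def ser_smult_def ser_monom_def
          ser_divZ_def ser_Z0_def)
  qed
qed

lemma Theta_inv_monom_XY: "Theta_inv (ser_monom 1 1 0 G) = ser_monom 1 1 0 (Theta_inv G)"
proof (intro ext)
  fix k r n
  show "Theta_inv (ser_monom 1 1 0 G) k r n = ser_monom 1 1 0 (Theta_inv G) k r n"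
  proof (induction k arbitrary: n)
    case 0
    then show ?case by (simp add: Theta_inv_0 ser_monom_def)
  next
    case (Suc k)
    then show ?case
      by (cases k) (simp_all add: Theta_inv_Suc Theta_inv_0 ser_monom_def)
  qed
qed

lemma Theta_inv_add: "Theta_inv (ser_add F G) = ser_add (Theta_inv F) (Theta_inv G)"
  unfolding Theta_inv_def ser_add_def by (simp add: algebra_simps sum.distrib)

lemma Theta_inv_one: "Theta_inv ser_one = ser_one"
  unfolding Theta_inv_def ser_one_def by (intro ext) (auto simp: sum.neutral)

lemma ser_monom_monom:
  "ser_monom a b c (ser_monom a' b' c' F) = ser_monom (a + a') (b + b') (c + c') F"
  unfolding ser_monom_def by (intro ext) (auto simp: diff_diff_add add.commute)

lemma ser_Z0_monom: "ser_Z0 (ser_monom a b 0 F) = ser_monom a b 0 (ser_Z0 F)"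
  unfolding ser_Z0_def ser_monom_def by (intro ext) auto

lemma ser_derivZ_monom: "ser_derivZ (ser_monom a b 0 F) = ser_monom a b 0 (ser_derivZ F)"
  unfolding ser_derivZ_def ser_monom_def by (intro ext) auto

lemma PP_XY_Theta_inv:
  fixes F :: ser
  defines "H \<equiv> ser_monom 1 1 0 (Theta_inv F)"
  shows "PP F = ser_add (ser_sub (ser_sub (ser_sub F (ser_monom 1 0 1 F)) (ser_monom 1 1 0 H))
            (ser_monom 1 0 0 H)) (ser_monom 1 0 0 (ser_Z0 H))"
  unfolding PP_def H_def ser_Z0_monom ser_monom_monom by (simp add: numeral_2_eq_2)

lemma QQ_XY_Theta_inv:
  "QQ F = ser_smult 2 (ser_monom 1 0 0 (ser_Z0 (ser_derivZ (ser_monom 1 1 0 (Theta_inv F)))))"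
  unfolding QQ_def ser_Z0_monom ser_derivZ_monom ser_monom_monom by (simp add: numeral_2_eq_2)

definition gamma_ser :: "nat \<Rightarrow> ser" where
  "gamma_ser j = (\<lambda>k r d. int (gamma_rec k r d j))"

lemma FF_eq_gamma_ser: "j = 1 \<or> j = 4 \<Longrightarrow> FF j = gamma_ser j"
  unfolding FF_def gamma_ser_def by (simp add: Gamma_eq_gamma_rec)

lemma Theta_gamma_ser_2: "Theta (gamma_ser 2) = ser_monom 1 1 0 (gamma_ser 1)"
proof (intro ext)
  fix k r d
  show "Theta (gamma_ser 2) k r d = ser_monom 1 1 0 (gamma_ser 1) k r d"
    using gamma_rec_toward[of 2 "k - 1" r d]
    by (cases k) (auto simp: Theta_def gamma_ser_def ser_sub_def ser_smult_def ser_monom_def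
        ser_divZ_def ser_Z0_def gamma_rec_Y_def rev_type_def)
qed

lemma Theta_gamma_ser_3: "Theta (gamma_ser 3) = ser_add ser_one (ser_monom 1 1 0 (gamma_ser 4))"
proof (intro ext)
  fix k r d
  show "Theta (gamma_ser 3) k r d = ser_add ser_one (ser_monom 1 1 0 (gamma_ser 4)) k r d"
    using gamma_rec_toward[of 3 "k - 1" r d]
    by (cases k) (auto simp: Theta_def gamma_ser_def ser_sub_def ser_smult_def ser_monom_def
        ser_divZ_def ser_Z0_def ser_add_def ser_one_def gamma_rec_Y_def rev_type_def)
qed

lemma XY_Theta_inv_gamma_ser_1: "ser_monom 1 1 0 (Theta_inv (gamma_ser 1)) = gamma_ser 2"
  by (metis Theta_inv_Theta Theta_gamma_ser_2 Theta_inv_monom_XY)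

lemma XY_Theta_inv_gamma_ser_4: "ser_monom 1 1 0 (Theta_inv (gamma_ser 4)) = ser_sub (gamma_ser 3) ser_one"
proof -
  have "gamma_ser 3 = ser_add ser_one (ser_monom 1 1 0 (Theta_inv (gamma_ser 4)))"
    by (metis Theta_inv_Theta Theta_gamma_ser_3 Theta_inv_add Theta_inv_one Theta_inv_monom_XY)
  then show ?thesis unfolding ser_sub_def ser_add_def by (intro ext) (simp add: fun_eq_iff)
qed

lemma gamma_rec_1_Suc:
  "gamma_rec (Suc k) r d 1 =
     (if d = 0 then gamma_rec_Y k r 0 2 + 2 * gamma_rec k r 1 3
      else gamma_rec_Y k r d 2 + gamma_rec k r (d - 1) 1 + gamma_rec k r d 2)"
  unfolding gamma_rec_Y_def by (simp add: gamma_rec.simps)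

lemma gamma_rec_4_Suc:
  "gamma_rec (Suc k) r d 4 =
     (if d = 0 then gamma_rec_Y k r 0 1 + 2 * gamma_rec k r 1 2
      else gamma_rec_Y k r d 3 + gamma_rec k r (d - 1) 4 + gamma_rec k r d 3)"
  unfolding gamma_rec_Y_def by (simp add: gamma_rec.simps)

lemma PP_gamma_ser_1_minus_QQ_gamma_ser_4:
  "ser_sub (PP (gamma_ser 1)) (QQ (gamma_ser 4)) = ser_one"
proof (intro ext)
  fix k r d
  show "ser_sub (PP (gamma_ser 1)) (QQ (gamma_ser 4)) k r d = ser_one k r d"
    unfolding PP_XY_Theta_inv QQ_XY_Theta_inv XY_Theta_inv_gamma_ser_1 XY_Theta_inv_gamma_ser_4
    by (cases k) (auto simp: gamma_ser_def ser_sub_def ser_add_def ser_smult_def ser_monom_def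
        ser_Z0_def ser_derivZ_def ser_one_def gamma_rec_1_Suc[unfolded One_nat_def] gamma_rec_Y_def)
qed

lemma neg_QQ_gamma_ser_1_plus_PP_gamma_ser_4:
  "ser_add (ser_neg (QQ (gamma_ser 1))) (PP (gamma_ser 4)) = ser_monom 1 1 0 ser_one"
proof (intro ext)
  fix k r d
  show "ser_add (ser_neg (QQ (gamma_ser 1))) (PP (gamma_ser 4)) k r d = ser_monom 1 1 0 ser_one k r d"
    unfolding PP_XY_Theta_inv QQ_XY_Theta_inv XY_Theta_inv_gamma_ser_1 XY_Theta_inv_gamma_ser_4
    by (cases k) (auto simp: gamma_ser_def ser_sub_def ser_add_def ser_neg_def ser_smult_def
        ser_monom_def ser_Z0_def ser_derivZ_def ser_one_def gamma_rec_4_Suc gamma_rec_Y_def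
        gamma_rec_dist_0[unfolded One_nat_def])
qed

theorem lemma4:
  shows "ser_sub (PP (FF 1)) (QQ (FF 4)) = ser_one \<and>
         ser_add (ser_neg (QQ (FF 1))) (PP (FF 4)) = ser_monom 1 1 0 ser_one"
  using PP_gamma_ser_1_minus_QQ_gamma_ser_4 neg_QQ_gamma_ser_1_plus_PP_gamma_ser_4
  by (simp add: FF_eq_gamma_ser)

end
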